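(* Let $\kappa$ be an uncountable regular cardinal. The following are equivalent: (1) $\diamondsuit_\kappa$ holds; (2) there is a joint diamond sequence of length $\kappa$ for $\kappa$; (3) there is a joint diamond sequence of length $2^\kappa$ for $\kappa$; (4) there exists a $\diamondsuit_\kappa$-tree.
   Context: A filter on $\kappa$ is normal if it is closed under diagonal intersections of $\kappa$-sequences of its members, and uniform if it contains all cobounded subsets of $\kappa$. A $\kappa$-list is a function $d\colon\kappa\to\mathcal{P}(\kappa)$ with $d(\alpha)\subseteq\alpha$ for all $\alpha$. A joint diamond sequence of length $\lambda$ for $\kappa$ is a sequence $\langle d_\alpha;\alpha<\lambda\rangle$ of $\kappa$-lists such that for every sequence $\langle a_\alpha;\alpha<\lambda\rangle$ of subsets of $\kappa$ there is a proper normal uniform filter $\mathcal{F}$ on $\kappa$ with $\{\xi<\kappa : d_\alpha(\xi)=a_\alpha\cap\xi\}\in\mathcal{F}$ for every $\alpha<\lambda$. A $\diamondsuit_\kappa$-tree is a function $D\colon {}^{<\kappa}2\to\mathcal{P}(\kappa)$ such that for every sequence $\langle a_s; s\in{}^\kappa 2\rangle$ of subsets of $\kappa$ there is a proper normal uniform filter on $\kappa$ containing all the sets $S_s=\{\xi<\kappa : D(s\restriction\xi)=a_s\cap\xi\}$, $s\in{}^\kappa2$. *)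

theory Defs
  imports Main "HOL-Library.Countable_Set"
begin

text \<open>The cardinal kappa is represented as the order type of a type 'a of class wellorder:
  elements of 'a are the ordinals below kappa, the ordinal xi is identified with the
  initial segment {..<xi}, and subsets of kappa are sets of type 'a set.\<close>

definition ord_rel :: "('a::wellorder) rel" where
  "ord_rel = {(x, y). x \<le> y}"

definition uncountable_regular_cardinal :: "('a::wellorder) itself \<Rightarrow> bool" where
  "uncountable_regular_cardinal _ \<longleftrightarrow>
     Card_order (ord_rel :: 'a rel) \<and> regularCard (ord_rel :: 'a rel) \<and>
     \<not> countable (UNIV :: 'a set)"

definition is_filter :: "('a::wellorder) set set \<Rightarrow> bool" where
  "is_filter F \<longleftrightarrow> UNIV \<in> F \<and>
     (\<forall>X Y. X \<in> F \<longrightarrow> X \<subseteq> Y \<longrightarrow> Y \<in> F) \<and>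
     (\<forall>X Y. X \<in> F \<longrightarrow> Y \<in> F \<longrightarrow> X \<inter> Y \<in> F)"

definition proper_filter :: "('a::wellorder) set set \<Rightarrow> bool" where
  "proper_filter F \<longleftrightarrow> is_filter F \<and> {} \<notin> F"

definition diag_inter :: "('a::wellorder \<Rightarrow> 'a set) \<Rightarrow> 'a set" where
  "diag_inter X = {\<xi>. \<forall>\<alpha><\<xi>. \<xi> \<in> X \<alpha>}"

definition normal_filter :: "('a::wellorder) set set \<Rightarrow> bool" where
  "normal_filter F \<longleftrightarrow> (\<forall>X. (\<forall>\<alpha>. X \<alpha> \<in> F) \<longrightarrow> diag_inter X \<in> F)"

definition cobounded :: "('a::wellorder) set \<Rightarrow> bool" where
  "cobounded X \<longleftrightarrow> (\<exists>\<beta>. \<forall>\<gamma>. \<gamma> \<notin> X \<longrightarrow> \<gamma> < \<beta>)"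

definition uniform_filter :: "('a::wellorder) set set \<Rightarrow> bool" where
  "uniform_filter F \<longleftrightarrow> (\<forall>X. cobounded X \<longrightarrow> X \<in> F)"

definition pnu_filter :: "('a::wellorder) set set \<Rightarrow> bool" where
  "pnu_filter F \<longleftrightarrow> proper_filter F \<and> normal_filter F \<and> uniform_filter F"

definition kappa_list :: "('a::wellorder \<Rightarrow> 'a set) \<Rightarrow> bool" where
  "kappa_list d \<longleftrightarrow> (\<forall>\<alpha>. d \<alpha> \<subseteq> {..<\<alpha>})"

text \<open>Joint diamond sequence indexed by a set of type 'i (its length is the cardinality of 'i).\<close>
definition joint_diamond :: "('i \<Rightarrow> 'a::wellorder \<Rightarrow> 'a set) \<Rightarrow> bool" where
  "joint_diamond d \<longleftrightarrow> (\<forall>i. kappa_list (d i)) \<and>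
     (\<forall>a :: 'i \<Rightarrow> 'a set. \<exists>F. pnu_filter F \<and>
        (\<forall>i. {\<xi>. d i \<xi> = a i \<inter> {..<\<xi>}} \<in> F))"

definition unbounded :: "('a::wellorder) set \<Rightarrow> bool" where
  "unbounded C \<longleftrightarrow> (\<forall>\<beta>. \<exists>\<gamma>\<in>C. \<beta> \<le> \<gamma>)"

text \<open>Closed: every nonzero alpha below kappa in which C is unbounded (necessarily a limit) lies in C.\<close>
definition closed_set :: "('a::wellorder) set \<Rightarrow> bool" where
  "closed_set C \<longleftrightarrow> (\<forall>\<alpha>. (\<exists>\<beta>. \<beta> < \<alpha>) \<and> (\<forall>\<beta><\<alpha>. \<exists>\<gamma>\<in>C. \<beta> < \<gamma> \<and> \<gamma> < \<alpha>) \<longrightarrow> \<alpha> \<in> C)"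

definition club :: "('a::wellorder) set \<Rightarrow> bool" where
  "club C \<longleftrightarrow> closed_set C \<and> unbounded C"

definition stationary :: "('a::wellorder) set \<Rightarrow> bool" where
  "stationary S \<longleftrightarrow> (\<forall>C. club C \<longrightarrow> S \<inter> C \<noteq> {})"

definition diamond :: "('a::wellorder) itself \<Rightarrow> bool" where
  "diamond _ \<longleftrightarrow> (\<exists>d :: 'a \<Rightarrow> 'a set. kappa_list d \<and>
     (\<forall>A. stationary {\<alpha>. A \<inter> {..<\<alpha>} = d \<alpha>}))"

text \<open>A node s of the tree of binary sequences of length less than kappa is coded by a pair
  (xi, X) with X a subset of {..<xi} (s = characteristic function of X on xi); a branch
  s in 2^kappa is coded by a subset s of kappa, and s restricted to xi is (xi, s \<inter> {..<xi}).
  Values of D at pairs (xi, X) with X not a subset of {..<xi} are irrelevant.\<close>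
definition diamond_tree :: "('a::wellorder \<Rightarrow> 'a set \<Rightarrow> 'a set) \<Rightarrow> bool" where
  "diamond_tree D \<longleftrightarrow> (\<forall>a :: 'a set \<Rightarrow> 'a set. \<exists>F. pnu_filter F \<and>
     (\<forall>s. {\<xi>. D \<xi> (s \<inter> {..<\<xi>}) = a s \<inter> {..<\<xi>}} \<in> F))"

end

theory Submission
  imports Defs
begin

text \<open>A \<open>\<diamond>\<^sub>\<kappa>\<close>-sequence guessing subsets of \<open>\<kappa> \<times> \<kappa>\<close> guesses, at stationarily many
  \<open>\<xi>\<close>, the restrictions to \<open>\<xi>\<close> of a whole \<open>\<kappa>\<close>-sequence of branches \<open>\<sigma> \<alpha>\<close> together with
  the prescribed sets \<open>a (\<sigma> \<alpha>)\<close>. Letting \<open>D\<close> answer a node with the prediction attached to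
  the first guessed branch through it, every club meets the diagonal intersection of the
  sets \<open>S (\<sigma> \<alpha>)\<close>, which is exactly what is needed for the supersets of such diagonal
  intersections (modulo clubs) to form a proper normal uniform filter; so
  \<open>\<diamond>\<^sub>\<kappa>\<close> yields a \<open>\<diamond>\<^sub>\<kappa>\<close>-tree. A tree restricts to a joint diamond sequence indexed
  by the branches \<open>2\<^sup>\<kappa>\<close>, which restricts to one indexed by \<open>\<kappa>\<close>, and each of its
  entries is a \<open>\<diamond>\<^sub>\<kappa>\<close>-sequence because a normal uniform filter contains all clubs.\<close>

unbundle cardinal_syntax

lemma ord_rel_iff [simp]: "(x, y) \<in> ord_rel \<longleftrightarrow> x \<le> y"
  by (simp add: ord_rel_def)

lemma Field_ord_rel [simp]: "Field ord_rel = UNIV"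
  unfolding Field_def ord_rel_def by auto

lemma closed_set_memI:
  assumes "closed_set C" "\<beta> < \<xi>" "\<forall>y<\<xi>. \<exists>\<gamma>\<in>C. y < \<gamma> \<and> \<gamma> < \<xi>"
  shows "\<xi> \<in> C"
  using assms unfolding closed_set_def by blast

lemma closed_set_closure_point:
  assumes "closed_set C" "\<forall>\<eta>. nxt \<eta> \<in> C \<and> \<eta> < nxt \<eta>" "\<beta> < \<xi>" "\<forall>\<alpha><\<xi>. nxt \<alpha> < \<xi>"
  shows "\<xi> \<in> C"
  using assms unfolding closed_set_def by blast

lemma is_filter_mono: "is_filter F \<Longrightarrow> X \<in> F \<Longrightarrow> X \<subseteq> Y \<Longrightarrow> Y \<in> F"
  unfolding is_filter_def by blast

lemma is_filter_Int: "is_filter F \<Longrightarrow> X \<in> F \<Longrightarrow> Y \<in> F \<Longrightarrow> X \<inter> Y \<in> F"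
  unfolding is_filter_def by blast

lemma pnu_filter_is_filter: "pnu_filter F \<Longrightarrow> is_filter F"
  unfolding pnu_filter_def proper_filter_def by blast

lemma pnu_filter_diag_inter: "pnu_filter F \<Longrightarrow> (\<And>\<alpha>. X \<alpha> \<in> F) \<Longrightarrow> diag_inter X \<in> F"
  unfolding pnu_filter_def normal_filter_def by blast

context
  assumes kappa: "uncountable_regular_cardinal TYPE('a::wellorder)"
begin

lemma UNIV_ordIso_ord_rel: "|UNIV::'a set| =o (ord_rel :: 'a rel)"
  using card_of_Field_ordIso kappa unfolding uncountable_regular_cardinal_def by fastforce

lemma infinite_UNIV: "infinite (UNIV::'a set)"
  using kappa countable_finite unfolding uncountable_regular_cardinal_def by blast

lemma exists_greater: "\<exists>y. (x::'a) < y"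
proof -
  have "Card_order (ord_rel :: 'a rel)"
    using kappa unfolding uncountable_regular_cardinal_def by blast
  then have "\<exists>y \<in> Field (ord_rel::'a rel). x \<noteq> y \<and> (x, y) \<in> ord_rel"
    by (rule infinite_Card_order_limit) (use infinite_UNIV in auto)
  then show ?thesis by (auto simp: less_le)
qed

lemma small_set_bounded:
  assumes "|X| <o |UNIV::'a set|"
  shows "\<exists>u. \<forall>x\<in>X. x < (u::'a)"
proof -
  have "\<not> cofinal X (ord_rel::'a rel)"
  proof
    assume "cofinal X (ord_rel::'a rel)"
    with kappa have "|X| =o (ord_rel::'a rel)"
      unfolding uncountable_regular_cardinal_def regularCard_def by auto
    then have "|X| =o |UNIV::'a set|"
      using ordIso_transitive ordIso_symmetric UNIV_ordIso_ord_rel by blast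
    with assms show False
      using not_ordLess_ordIso by blast
  qed
  then obtain a where "\<forall>x\<in>X. \<not> (a \<noteq> x \<and> a \<le> x)"
    unfolding cofinal_def by auto
  then have a: "\<forall>x\<in>X. x \<le> a"
    by (auto simp: not_le)
  obtain u where "a < u" using exists_greater by blast
  with a show ?thesis by (meson le_less_trans)
qed

lemma atMost_image_bounded: "\<exists>u. \<forall>\<gamma>\<le>(\<eta>::'a). (g \<gamma> :: 'a) < u"
proof -
  obtain s where "\<eta> < s" using exists_greater by blast
  then have "{..\<eta>} \<subseteq> underS (ord_rel::'a rel) s"
    unfolding underS_def by auto
  moreover have "|underS (ord_rel::'a rel) s| <o |UNIV::'a set|"
    using card_of_underS[of ord_rel s] kappa UNIV_ordIso_ord_rel ordLess_ordIso_trans ordIso_symmetric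
    unfolding uncountable_regular_cardinal_def by fastforce
  ultimately have "|g ` {..\<eta>}| <o |UNIV::'a set|"
    using card_of_image card_of_mono1 ordLeq_ordLess_trans by metis
  then show ?thesis
    using small_set_bounded[of "g ` {..\<eta>}"] by auto
qed

lemma range_nat_bounded:
  fixes b :: "nat \<Rightarrow> 'a"
  shows "\<exists>u. \<forall>n. b n < u"
proof -
  have "\<not> |UNIV::'a set| \<le>o |UNIV::nat set|"
    using kappa unfolding uncountable_regular_cardinal_def countable_def card_of_ordLeq[symmetric]
    by auto
  then have "|range b| <o |UNIV::'a set|"
    using not_ordLeq_iff_ordLess card_of_Well_order card_of_image ordLeq_ordLess_trans by metis
  then show ?thesis
    using small_set_bounded[of "range b"] by auto
qed

lemma range_nat_sup:
  fixes b :: "nat \<Rightarrow> 'a"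
  shows "\<exists>\<xi>. (\<forall>n. b n < \<xi>) \<and> (\<forall>y<\<xi>. \<exists>n. y \<le> b n)"
proof -
  obtain u where "\<forall>n. b n < u" using range_nat_bounded[of b] by blast
  then have "\<forall>n. b n < (LEAST \<xi>. \<forall>n. b n < \<xi>)"
    by (rule LeastI)
  moreover have "\<exists>n. y \<le> b n" if "y < (LEAST \<xi>. \<forall>n. b n < \<xi>)" for y
    using not_less_Least[OF that] by (auto simp: not_less)
  ultimately show ?thesis by blast
qed

text \<open>Iterate \<omega> times, starting at \<open>\<beta>\<close>, a function dominating \<open>g\<close> on initial segments;
  the supremum of the iterates lies below \<open>\<kappa>\<close> because \<open>cf \<kappa> > \<omega>\<close>.\<close>

lemma closure_point_above: "\<exists>\<xi>. \<beta> < \<xi> \<and> (\<forall>\<alpha><\<xi>. (g \<alpha> :: 'a) < \<xi>)"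
proof -
  have "\<forall>\<eta>. \<exists>u. \<forall>\<gamma>\<le>\<eta>. g \<gamma> < (u::'a)"
    using atMost_image_bounded[where g=g] by blast
  then obtain h where h: "\<And>\<eta> \<gamma>. \<gamma> \<le> \<eta> \<Longrightarrow> g \<gamma> < h \<eta>"
    by (metis choice)
  obtain \<xi> where above: "\<forall>n. (h^^n) \<beta> < \<xi>" and below: "\<forall>y<\<xi>. \<exists>n. y \<le> (h^^n) \<beta>"
    using range_nat_sup[of "\<lambda>n. (h^^n) \<beta>"] by blast
  have "g \<alpha> < \<xi>" if \<alpha>: "\<alpha> < \<xi>" for \<alpha>
  proof -
    obtain n where "\<alpha> \<le> (h^^n) \<beta>" using below \<alpha> by blast
    then have "g \<alpha> < h ((h^^n) \<beta>)" by (rule h)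
    also have "\<dots> < \<xi>" using above[rule_format, of "Suc n"] by simp
    finally show ?thesis .
  qed
  moreover have "\<beta> < \<xi>" using above[rule_format, of 0] by simp
  ultimately show ?thesis by blast
qed

lemma club_next: "club C \<Longrightarrow> \<exists>\<gamma>\<in>C. (\<eta>::'a) < \<gamma>"
  unfolding club_def unbounded_def by (meson exists_greater less_le_trans)

lemma club_next_fun: "club C \<Longrightarrow> \<exists>nxt. \<forall>\<eta>::'a. nxt \<eta> \<in> C \<and> \<eta> < nxt \<eta>"
  using club_next by (metis choice)

lemma club_greaterThan: "club {(\<beta>::'a)<..}"
  unfolding club_def
proof
  show "closed_set {\<beta><..}"
    unfolding closed_set_def by (auto intro: less_trans)
  show "unbounded {\<beta><..}"
    unfolding unbounded_def
  proof
    fix \<gamma>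
    obtain u where "max \<beta> \<gamma> < u" using exists_greater by blast
    then show "\<exists>u\<in>{\<beta><..}. \<gamma> \<le> u" by (auto intro: less_imp_le)
  qed
qed

lemma club_Int:
  assumes C: "club C" and D: "club (D::'a set)"
  shows "club (C \<inter> D)"
  unfolding club_def
proof
  show "closed_set (C \<inter> D)"
    using C D unfolding club_def closed_set_def by blast
  obtain nC where nC: "\<forall>\<eta>. nC \<eta> \<in> C \<and> \<eta> < nC \<eta>" using club_next_fun[OF C] by blast
  obtain nD where nD: "\<forall>\<eta>. nD \<eta> \<in> D \<and> \<eta> < nD \<eta>" using club_next_fun[OF D] by blast
  show "unbounded (C \<inter> D)"
    unfolding unbounded_def
  proof
    fix \<beta>
    obtain \<xi> where \<xi>: "\<beta> < \<xi>" "\<forall>\<alpha><\<xi>. max (nC \<alpha>) (nD \<alpha>) < \<xi>"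
      using closure_point_above[where g="\<lambda>\<alpha>. max (nC \<alpha>) (nD \<alpha>)"] by blast
    have "\<forall>\<alpha><\<xi>. nC \<alpha> < \<xi>" "\<forall>\<alpha><\<xi>. nD \<alpha> < \<xi>"
      using \<xi>(2) by auto
    then have "\<xi> \<in> C \<inter> D"
      using closed_set_closure_point C D nC nD \<xi>(1) unfolding club_def by blast
    then show "\<exists>\<gamma>\<in>C \<inter> D. \<beta> \<le> \<gamma>" using \<xi>(1) less_imp_le by blast
  qed
qed

lemma club_Diag:
  assumes Cs: "\<And>\<beta>. club (Cs \<beta>)"
  shows "club {\<xi>::'a. \<forall>\<beta><\<xi>. \<xi> \<in> Cs \<beta>}"
  unfolding club_def
proof
  have closed: "closed_set (Cs \<beta>)" for \<beta>
    using Cs unfolding club_def by blast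
  show "closed_set {\<xi>. \<forall>\<beta><\<xi>. \<xi> \<in> Cs \<beta>}"
    unfolding closed_set_def
  proof (intro allI impI CollectI)
    fix \<alpha> \<beta>
    assume lim: "(\<exists>\<beta>. \<beta> < \<alpha>) \<and> (\<forall>y<\<alpha>. \<exists>\<gamma>\<in>{\<xi>. \<forall>\<beta><\<xi>. \<xi> \<in> Cs \<beta>}. y < \<gamma> \<and> \<gamma> < \<alpha>)"
      and "\<beta> < \<alpha>"
    have "\<exists>\<gamma>\<in>Cs \<beta>. y < \<gamma> \<and> \<gamma> < \<alpha>" if "y < \<alpha>" for y
    proof -
      have "max y \<beta> < \<alpha>" using \<open>\<beta> < \<alpha>\<close> that by simp
      then obtain \<gamma> where "\<gamma> \<in> {\<xi>. \<forall>\<beta><\<xi>. \<xi> \<in> Cs \<beta>}" "max y \<beta> < \<gamma>" "\<gamma> < \<alpha>"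
        using lim by blast
      then show ?thesis by auto
    qed
    then show "\<alpha> \<in> Cs \<beta>"
      using closed_set_memI[OF closed \<open>\<beta> < \<alpha>\<close>] by blast
  qed
  obtain nxt where nxt: "\<And>\<beta> \<eta>. nxt \<beta> \<eta> \<in> Cs \<beta>" "\<And>\<beta> \<eta>. \<eta> < nxt \<beta> \<eta>"
    using club_next_fun[OF Cs] by metis
  have "\<exists>u. \<forall>\<beta>\<le>\<eta>. nxt \<beta> \<eta> < u" for \<eta>
    using atMost_image_bounded[where g="\<lambda>\<beta>. nxt \<beta> \<eta>"] by blast
  then obtain g where g: "\<And>\<eta> \<beta>. \<beta> \<le> \<eta> \<Longrightarrow> nxt \<beta> \<eta> < g \<eta>"
    by metis
  show "unbounded {\<xi>. \<forall>\<beta><\<xi>. \<xi> \<in> Cs \<beta>}"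
    unfolding unbounded_def
  proof
    fix \<beta>\<^sub>0
    obtain \<xi> where \<xi>: "\<beta>\<^sub>0 < \<xi>" "\<forall>\<alpha><\<xi>. g \<alpha> < \<xi>"
      using closure_point_above[where g=g] by blast
    have "\<xi> \<in> Cs \<beta>" if "\<beta> < \<xi>" for \<beta>
    proof (rule closed_set_memI[OF closed that], intro allI impI)
      fix y assume "y < \<xi>"
      then have "max y \<beta> < \<xi>" using that by simp
      then have "nxt \<beta> (max y \<beta>) < \<xi>"
        using g[of \<beta> "max y \<beta>"] \<xi>(2) by (meson less_trans max.cobounded2)
      moreover have "y < nxt \<beta> (max y \<beta>)"
        using nxt(2)[of "max y \<beta>" \<beta>] by simp
      ultimately show "\<exists>\<gamma>\<in>Cs \<beta>. y < \<gamma> \<and> \<gamma> < \<xi>" using nxt(1) by blast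
    qed
    then show "\<exists>\<gamma>\<in>{\<xi>. \<forall>\<beta><\<xi>. \<xi> \<in> Cs \<beta>}. \<beta>\<^sub>0 \<le> \<gamma>" using \<xi>(1) less_imp_le by blast
  qed
qed

lemma club_closed_under:
  fixes f :: "'a \<Rightarrow> 'a \<Rightarrow> 'a"
  shows "club {\<xi>. \<forall>\<alpha><\<xi>. \<forall>\<beta><\<xi>. f \<alpha> \<beta> < \<xi>}"
  unfolding club_def
proof
  show "closed_set {\<xi>. \<forall>\<alpha><\<xi>. \<forall>\<beta><\<xi>. f \<alpha> \<beta> < \<xi>}"
    unfolding closed_set_def
  proof (intro allI impI CollectI)
    fix \<xi> \<alpha> \<beta>
    assume lim: "(\<exists>\<beta>. \<beta> < \<xi>) \<and> (\<forall>y<\<xi>. \<exists>\<gamma>\<in>{\<xi>. \<forall>\<alpha><\<xi>. \<forall>\<beta><\<xi>. f \<alpha> \<beta> < \<xi>}. y < \<gamma> \<and> \<gamma> < \<xi>)"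
      and "\<alpha> < \<xi>" "\<beta> < \<xi>"
    moreover have "max \<alpha> \<beta> < \<xi>" using \<open>\<alpha> < \<xi>\<close> \<open>\<beta> < \<xi>\<close> by simp
    ultimately obtain \<gamma> where "\<gamma> \<in> {\<xi>. \<forall>\<alpha><\<xi>. \<forall>\<beta><\<xi>. f \<alpha> \<beta> < \<xi>}" "max \<alpha> \<beta> < \<gamma>" "\<gamma> < \<xi>"
      by blast
    then show "f \<alpha> \<beta> < \<xi>" by (auto intro: less_trans)
  qed
  have "\<exists>v. \<forall>\<alpha>\<le>\<eta>. \<forall>\<beta>\<le>\<eta>. f \<alpha> \<beta> < v" for \<eta>
  proof -
    have "\<exists>u. \<forall>\<beta>\<le>\<eta>. f \<alpha> \<beta> < u" for \<alpha>
      using atMost_image_bounded[where g="f \<alpha>"] by blast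
    then obtain u where u: "\<And>\<alpha> \<beta>. \<beta> \<le> \<eta> \<Longrightarrow> f \<alpha> \<beta> < u \<alpha>"
      by metis
    obtain v where "\<forall>\<alpha>\<le>\<eta>. u \<alpha> < v"
      using atMost_image_bounded[where g=u] by blast
    then show ?thesis
      using u less_trans by blast
  qed
  then obtain g where g: "\<And>\<eta> \<alpha> \<beta>. \<alpha> \<le> \<eta> \<Longrightarrow> \<beta> \<le> \<eta> \<Longrightarrow> f \<alpha> \<beta> < g \<eta>"
    by metis
  show "unbounded {\<xi>. \<forall>\<alpha><\<xi>. \<forall>\<beta><\<xi>. f \<alpha> \<beta> < \<xi>}"
    unfolding unbounded_def
  proof
    fix \<beta>\<^sub>0
    obtain \<xi> where \<xi>: "\<beta>\<^sub>0 < \<xi>" "\<forall>\<alpha><\<xi>. g \<alpha> < \<xi>"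
      using closure_point_above[where g=g] by blast
    have "f \<alpha> \<beta> < \<xi>" if "\<alpha> < \<xi>" "\<beta> < \<xi>" for \<alpha> \<beta>
      using g[of \<alpha> "max \<alpha> \<beta>" \<beta>] \<xi>(2) that by (meson less_trans max.cobounded1 max.cobounded2 max_less_iff_conj)
    then show "\<exists>\<gamma>\<in>{\<xi>. \<forall>\<alpha><\<xi>. \<forall>\<beta><\<xi>. f \<alpha> \<beta> < \<xi>}. \<beta>\<^sub>0 \<le> \<gamma>" using \<xi>(1) less_imp_le by blast
  qed
qed

lemma pnu_filter_greaterThan:
  assumes "pnu_filter F"
  shows "{(\<beta>::'a)<..} \<in> F"
proof -
  obtain u where "\<beta> < u" using exists_greater by blast
  then have "cobounded {\<beta><..}"
    unfolding cobounded_def by (metis greaterThan_iff le_less_trans not_less)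
  then show ?thesis
    using assms unfolding pnu_filter_def uniform_filter_def by blast
qed

text \<open>Normality turns the unboundedness of \<open>C\<close> into a diagonal intersection of tails,
  and closedness puts that diagonal intersection inside \<open>C\<close>.\<close>

lemma club_in_pnu_filter:
  assumes F: "pnu_filter F" and C: "club (C::'a set)"
  shows "C \<in> F"
proof -
  fix a :: 'a
  obtain nxt where nxt: "\<forall>\<eta>. nxt \<eta> \<in> C \<and> \<eta> < nxt \<eta>" using club_next_fun[OF C] by blast
  have "diag_inter (\<lambda>\<beta>. {nxt \<beta><..}) \<in> F"
    by (rule pnu_filter_diag_inter[OF F]) (rule pnu_filter_greaterThan[OF F])
  then have "diag_inter (\<lambda>\<beta>. {nxt \<beta><..}) \<inter> {a<..} \<in> F"
    using pnu_filter_greaterThan[OF F] is_filter_Int[OF pnu_filter_is_filter[OF F]] by blast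
  moreover have "diag_inter (\<lambda>\<beta>. {nxt \<beta><..}) \<inter> {a<..} \<subseteq> C"
  proof
    fix \<xi> assume "\<xi> \<in> diag_inter (\<lambda>\<beta>. {nxt \<beta><..}) \<inter> {a<..}"
    then have "a < \<xi>" "\<forall>\<beta><\<xi>. nxt \<beta> < \<xi>"
      unfolding diag_inter_def by auto
    then show "\<xi> \<in> C"
      using C closed_set_closure_point[of C nxt a \<xi>] nxt unfolding club_def by blast
  qed
  ultimately show ?thesis
    using is_filter_mono[OF pnu_filter_is_filter[OF F]] by blast
qed

lemma pnu_filter_stationary:
  assumes F: "pnu_filter F" and "S \<in> F"
  shows "stationary (S::'a set)"
  unfolding stationary_def
proof (intro allI impI)
  fix C :: "'a set" assume "club C"
  then have "S \<inter> C \<in> F"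
    using assms club_in_pnu_filter is_filter_Int[OF pnu_filter_is_filter[OF F]] by blast
  then show "S \<inter> C \<noteq> {}"
    using F unfolding pnu_filter_def proper_filter_def by auto
qed

lemma inj_pairing: "\<exists>\<pi>::'a \<times> 'a \<Rightarrow> 'a. inj \<pi>"
proof -
  have "|(UNIV::'a set) \<times> (UNIV::'a set)| \<le>o |UNIV::'a set|"
    using card_of_Times_same_infinite[OF infinite_UNIV] ordIso_iff_ordLeq by blast
  then show ?thesis
    using card_of_ordLeq[of "UNIV \<times> UNIV" "UNIV::'a set"] by auto
qed

lemma pnu_filter_generated:
  fixes S :: "'b \<Rightarrow> 'a set"
  assumes diag_meets_club: "\<And>\<sigma> C. club C \<Longrightarrow> C \<inter> diag_inter (\<lambda>\<alpha>. S (\<sigma> \<alpha>)) \<noteq> {}"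
  shows "\<exists>F. pnu_filter F \<and> (\<forall>s. S s \<in> F)"
proof -
  define F where "F = {X. \<exists>\<sigma> C. club C \<and> C \<inter> diag_inter (\<lambda>\<alpha>. S (\<sigma> \<alpha>)) \<subseteq> X}"
  have F_intro: "X \<in> F" if "club C" "C \<inter> diag_inter (\<lambda>\<alpha>. S (\<sigma> \<alpha>)) \<subseteq> X" for X C \<sigma>
    using that unfolding F_def by blast
  have mono: "Y \<in> F" if "X \<in> F" "X \<subseteq> Y" for X Y
    using that unfolding F_def by blast
  have club_in: "C \<in> F" if "club C" for C
    using F_intro[OF that, where X=C] by blast
  have Int_club: "X \<inter> C \<in> F" if X: "X \<in> F" and C: "club C" for X C
  proof -
    obtain \<sigma> C' where "club C'" "C' \<inter> diag_inter (\<lambda>\<alpha>. S (\<sigma> \<alpha>)) \<subseteq> X"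
      using X unfolding F_def by blast
    then show ?thesis
      using F_intro[of "C' \<inter> C" \<sigma> "X \<inter> C"] club_Int[OF _ C] by blast
  qed
  have normal: "diag_inter X \<in> F" if X: "\<And>\<beta>. X \<beta> \<in> F" for X
  proof -
    have "\<exists>\<sigma>s. \<forall>\<beta>. \<exists>C. club C \<and> C \<inter> diag_inter (\<lambda>\<alpha>. S (\<sigma>s \<beta> \<alpha>)) \<subseteq> X \<beta>"
      by (rule choice) (use X in \<open>auto simp: F_def\<close>)
    then obtain \<sigma>s where "\<forall>\<beta>. \<exists>C. club C \<and> C \<inter> diag_inter (\<lambda>\<alpha>. S (\<sigma>s \<beta> \<alpha>)) \<subseteq> X \<beta>"
      by blast
    then have "\<exists>Cs. \<forall>\<beta>. club (Cs \<beta>) \<and> Cs \<beta> \<inter> diag_inter (\<lambda>\<alpha>. S (\<sigma>s \<beta> \<alpha>)) \<subseteq> X \<beta>"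
      by (rule choice)
    then obtain Cs where Cs: "\<And>\<beta>. club (Cs \<beta>)"
      and sub: "\<And>\<beta>. Cs \<beta> \<inter> diag_inter (\<lambda>\<alpha>. S (\<sigma>s \<beta> \<alpha>)) \<subseteq> X \<beta>"
      by blast
    obtain \<pi> :: "'a \<times> 'a \<Rightarrow> 'a" where \<pi>: "inj \<pi>" using inj_pairing by blast
    define \<sigma> where "\<sigma> \<gamma> = case_prod \<sigma>s (inv \<pi> \<gamma>)" for \<gamma>
    define C where "C = {\<xi>. \<forall>\<beta><\<xi>. \<xi> \<in> Cs \<beta>} \<inter> {\<xi>. \<forall>\<beta><\<xi>. \<forall>\<alpha><\<xi>. \<pi> (\<beta>, \<alpha>) < \<xi>}"
    have "club C"
      unfolding C_def using Cs by (intro club_Int club_Diag club_closed_under)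
    moreover have "C \<inter> diag_inter (\<lambda>\<gamma>. S (\<sigma> \<gamma>)) \<subseteq> diag_inter X"
    proof (intro subsetI, unfold diag_inter_def, intro CollectI allI impI)
      fix \<xi> \<beta>
      assume \<xi>: "\<xi> \<in> C \<inter> {\<xi>. \<forall>\<gamma><\<xi>. \<xi> \<in> S (\<sigma> \<gamma>)}" and "\<beta> < \<xi>"
      have "\<xi> \<in> S (\<sigma>s \<beta> \<alpha>)" if "\<alpha> < \<xi>" for \<alpha>
      proof -
        have "\<pi> (\<beta>, \<alpha>) < \<xi>" using \<xi> \<open>\<beta> < \<xi>\<close> that unfolding C_def by blast
        then have "\<xi> \<in> S (\<sigma> (\<pi> (\<beta>, \<alpha>)))" using \<xi> by blast
        then show ?thesis unfolding \<sigma>_def inv_f_f[OF \<pi>] by simp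
      qed
      moreover have "\<xi> \<in> Cs \<beta>" using \<xi> \<open>\<beta> < \<xi>\<close> unfolding C_def by blast
      ultimately show "\<xi> \<in> X \<beta>" using sub[of \<beta>] unfolding diag_inter_def by blast
    qed
    ultimately show ?thesis by (rule F_intro)
  qed
  obtain a b :: 'a where "a < b" using exists_greater by blast
  have Int: "X \<inter> Y \<in> F" if "X \<in> F" "Y \<in> F" for X Y
  proof -
    define Z where "Z \<beta> = (if \<beta> = a then X else Y)" for \<beta>
    have "diag_inter Z \<inter> {b<..} \<in> F"
      using that by (intro Int_club normal club_greaterThan) (simp add: Z_def)
    moreover have "diag_inter Z \<inter> {b<..} \<subseteq> X \<inter> Y"
      using \<open>a < b\<close> unfolding diag_inter_def Z_def by (auto dest: less_trans)
    ultimately show ?thesis using mono by blast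
  qed
  have uniform: "X \<in> F" if X: "cobounded X" for X
  proof -
    obtain \<beta> where "\<forall>\<gamma>. \<gamma> \<notin> X \<longrightarrow> \<gamma> < \<beta>" using X unfolding cobounded_def by blast
    then have "{\<beta><..} \<subseteq> X" by fastforce
    then show ?thesis using mono club_in club_greaterThan by blast
  qed
  have S_in: "S s \<in> F" for s
    by (rule F_intro[OF club_greaterThan[of a], where \<sigma>="\<lambda>_. s"]) (auto simp: diag_inter_def)
  have "UNIV \<in> F"
    using mono club_in club_greaterThan by blast
  moreover have "{} \<notin> F"
    unfolding F_def using diag_meets_club by blast
  ultimately have "pnu_filter F"
    unfolding pnu_filter_def proper_filter_def is_filter_def normal_filter_def uniform_filter_def
    by (intro conjI allI impI) (use mono Int normal uniform in blast)+
  with S_in show ?thesis by blast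
qed

lemma diamond_product:
  assumes "diamond TYPE('a)"
  shows "\<exists>G :: 'a \<Rightarrow> ('a \<times> 'a) set. \<forall>A. stationary {\<xi>. G \<xi> = A \<inter> ({..<\<xi>} \<times> {..<\<xi>})}"
proof -
  obtain d :: "'a \<Rightarrow> 'a set" where d: "\<And>A. stationary {\<xi>. A \<inter> {..<\<xi>} = d \<xi>}"
    using assms unfolding diamond_def by blast
  obtain \<pi> :: "'a \<times> 'a \<Rightarrow> 'a" where \<pi>: "inj \<pi>" using inj_pairing by blast
  define G where "G \<xi> = {p \<in> {..<\<xi>} \<times> {..<\<xi>}. \<pi> p \<in> d \<xi>}" for \<xi>
  have "stationary {\<xi>. G \<xi> = A \<inter> ({..<\<xi>} \<times> {..<\<xi>})}" for A
    unfolding stationary_def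
  proof (intro allI impI)
    fix C :: "'a set" assume "club C"
    then have "club (C \<inter> {\<xi>. \<forall>\<alpha><\<xi>. \<forall>\<beta><\<xi>. \<pi> (\<alpha>, \<beta>) < \<xi>})"
      by (rule club_Int[OF _ club_closed_under])
    then obtain \<xi> where \<xi>: "\<pi> ` A \<inter> {..<\<xi>} = d \<xi>" "\<xi> \<in> C"
      and closed: "\<forall>\<alpha><\<xi>. \<forall>\<beta><\<xi>. \<pi> (\<alpha>, \<beta>) < \<xi>"
      using d[of "\<pi> ` A", unfolded stationary_def, rule_format] by blast
    have "\<pi> p \<in> d \<xi> \<longleftrightarrow> p \<in> A" if "p \<in> {..<\<xi>} \<times> {..<\<xi>}" for p
    proof -
      have "\<pi> p < \<xi>" using closed that by auto
      then show ?thesis unfolding \<xi>(1)[symmetric] by (simp add: inj_image_mem_iff[OF \<pi>])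
    qed
    then have "G \<xi> = A \<inter> ({..<\<xi>} \<times> {..<\<xi>})"
      unfolding G_def by blast
    with \<xi>(2) show "{\<xi>. G \<xi> = A \<inter> ({..<\<xi>} \<times> {..<\<xi>})} \<inter> C \<noteq> {}" by blast
  qed
  then show ?thesis by blast
qed

text \<open>Below a point of this club, two members of \<open>\<sigma>\<close> are already told apart by their
  restrictions, since the least point where they differ has been closed under.\<close>

lemma club_separating:
  fixes \<sigma> :: "'a \<Rightarrow> 'a set"
  obtains C where "club C"
    "\<And>\<xi> \<alpha> \<beta>. \<xi> \<in> C \<Longrightarrow> \<alpha> < \<xi> \<Longrightarrow> \<beta> < \<xi> \<Longrightarrow> \<sigma> \<alpha> \<inter> {..<\<xi>} = \<sigma> \<beta> \<inter> {..<\<xi>} \<Longrightarrow> \<sigma> \<alpha> = \<sigma> \<beta>"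
proof -
  define \<delta> where "\<delta> \<alpha> \<beta> = (SOME x. (x \<in> \<sigma> \<alpha>) \<noteq> (x \<in> \<sigma> \<beta>))" for \<alpha> \<beta>
  have \<delta>: "(\<delta> \<alpha> \<beta> \<in> \<sigma> \<alpha>) \<noteq> (\<delta> \<alpha> \<beta> \<in> \<sigma> \<beta>)" if "\<sigma> \<alpha> \<noteq> \<sigma> \<beta>" for \<alpha> \<beta>
    unfolding \<delta>_def by (rule someI_ex) (use that in blast)
  show ?thesis
  proof (rule that[OF club_closed_under[of \<delta>]], rule ccontr)
    fix \<xi> \<alpha> \<beta>
    assume "\<xi> \<in> {\<xi>. \<forall>\<alpha><\<xi>. \<forall>\<beta><\<xi>. \<delta> \<alpha> \<beta> < \<xi>}" "\<alpha> < \<xi>" "\<beta> < \<xi>"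
      and restr: "\<sigma> \<alpha> \<inter> {..<\<xi>} = \<sigma> \<beta> \<inter> {..<\<xi>}" and "\<sigma> \<alpha> \<noteq> \<sigma> \<beta>"
    then have "\<delta> \<alpha> \<beta> \<in> {..<\<xi>}" by simp
    then show False
      using \<delta>[OF \<open>\<sigma> \<alpha> \<noteq> \<sigma> \<beta>\<close>] restr by blast
  qed
qed

text \<open>At \<open>\<xi>\<close> the guess \<open>G \<xi>\<close> is read as two \<open>\<xi>\<close>-sequences, of predicted branches
  (row \<open>\<pi> (\<alpha>, c\<^sub>0)\<close>) and predicted targets (row \<open>\<pi> (\<alpha>, c\<^sub>1)\<close>); \<open>D\<close> answers a node with
  the target of the first predicted branch through it.\<close>

lemma diamond_imp_diamond_tree:
  assumes "diamond TYPE('a)"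
  shows "\<exists>D :: 'a \<Rightarrow> 'a set \<Rightarrow> 'a set. diamond_tree D"
proof -
  obtain G :: "'a \<Rightarrow> ('a \<times> 'a) set" where G: "\<And>A. stationary {\<xi>. G \<xi> = A \<inter> ({..<\<xi>} \<times> {..<\<xi>})}"
    using diamond_product[OF assms] by blast
  obtain \<pi> :: "'a \<times> 'a \<Rightarrow> 'a" where \<pi>: "inj \<pi>" using inj_pairing by blast
  obtain c\<^sub>0 c\<^sub>1 :: 'a where "c\<^sub>0 < c\<^sub>1" using exists_greater by blast
  define branch where "branch \<xi> \<alpha> = {x. (\<pi> (\<alpha>, c\<^sub>0), x) \<in> G \<xi>}" for \<xi> \<alpha>
  define target where "target \<xi> \<alpha> = {x. (\<pi> (\<alpha>, c\<^sub>1), x) \<in> G \<xi>}" for \<xi> \<alpha>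
  define D where "D \<xi> t = (if \<exists>\<alpha><\<xi>. branch \<xi> \<alpha> = t
    then target \<xi> (LEAST \<alpha>. \<alpha> < \<xi> \<and> branch \<xi> \<alpha> = t) else {})" for \<xi> t
  have "diamond_tree D"
    unfolding diamond_tree_def
  proof
    fix a :: "'a set \<Rightarrow> 'a set"
    show "\<exists>F. pnu_filter F \<and> (\<forall>s. {\<xi>. D \<xi> (s \<inter> {..<\<xi>}) = a s \<inter> {..<\<xi>}} \<in> F)"
    proof (rule pnu_filter_generated)
      fix \<sigma> :: "'a \<Rightarrow> 'a set" and C :: "'a set"
      assume "club C"
      obtain C' where "club C'" and separating: "\<And>\<xi> \<alpha> \<beta>. \<xi> \<in> C' \<Longrightarrow> \<alpha> < \<xi> \<Longrightarrow> \<beta> < \<xi> \<Longrightarrow>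
          \<sigma> \<alpha> \<inter> {..<\<xi>} = \<sigma> \<beta> \<inter> {..<\<xi>} \<Longrightarrow> \<sigma> \<alpha> = \<sigma> \<beta>"
        using club_separating by blast
      define A where "A = {(\<pi> (\<alpha>, c\<^sub>0), x) | \<alpha> x. x \<in> \<sigma> \<alpha>} \<union> {(\<pi> (\<alpha>, c\<^sub>1), x) | \<alpha> x. x \<in> a (\<sigma> \<alpha>)}"
      have "club (C \<inter> C' \<inter> {\<xi>. \<forall>\<alpha><\<xi>. \<forall>\<beta><\<xi>. \<pi> (\<alpha>, \<beta>) < \<xi>} \<inter> {c\<^sub>1<..})"
        by (intro club_Int \<open>club C\<close> \<open>club C'\<close> club_closed_under club_greaterThan)
      then obtain \<xi> where guess: "G \<xi> = A \<inter> ({..<\<xi>} \<times> {..<\<xi>})" and "\<xi> \<in> C" "\<xi> \<in> C'"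
        and closed: "\<forall>\<alpha><\<xi>. \<forall>\<beta><\<xi>. \<pi> (\<alpha>, \<beta>) < \<xi>" and "c\<^sub>1 < \<xi>"
        using G[of A, unfolded stationary_def, rule_format] by blast
      then have "c\<^sub>0 < \<xi>" using \<open>c\<^sub>0 < c\<^sub>1\<close> by simp
      have row\<^sub>0: "(\<pi> (\<alpha>, c\<^sub>0), x) \<in> A \<longleftrightarrow> x \<in> \<sigma> \<alpha>" for \<alpha> x
        using \<open>c\<^sub>0 < c\<^sub>1\<close> unfolding A_def by (auto simp: inj_eq[OF \<pi>])
      have row\<^sub>1: "(\<pi> (\<alpha>, c\<^sub>1), x) \<in> A \<longleftrightarrow> x \<in> a (\<sigma> \<alpha>)" for \<alpha> x
        using \<open>c\<^sub>0 < c\<^sub>1\<close> unfolding A_def by (auto simp: inj_eq[OF \<pi>])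
      have branch: "branch \<xi> \<alpha> = \<sigma> \<alpha> \<inter> {..<\<xi>}" if "\<alpha> < \<xi>" for \<alpha>
        using closed that \<open>c\<^sub>0 < \<xi>\<close> unfolding branch_def guess by (auto simp: row\<^sub>0)
      have target: "target \<xi> \<alpha> = a (\<sigma> \<alpha>) \<inter> {..<\<xi>}" if "\<alpha> < \<xi>" for \<alpha>
        using closed that \<open>c\<^sub>1 < \<xi>\<close> unfolding target_def guess by (auto simp: row\<^sub>1)
      have "D \<xi> (\<sigma> \<alpha> \<inter> {..<\<xi>}) = a (\<sigma> \<alpha>) \<inter> {..<\<xi>}" if "\<alpha> < \<xi>" for \<alpha>
      proof -
        define \<beta> where "\<beta> = (LEAST \<beta>. \<beta> < \<xi> \<and> branch \<xi> \<beta> = \<sigma> \<alpha> \<inter> {..<\<xi>})"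
        have \<beta>: "\<beta> < \<xi> \<and> branch \<xi> \<beta> = \<sigma> \<alpha> \<inter> {..<\<xi>}"
          unfolding \<beta>_def by (rule LeastI[of _ \<alpha>]) (simp add: branch that)
        then have "\<sigma> \<beta> \<inter> {..<\<xi>} = \<sigma> \<alpha> \<inter> {..<\<xi>}"
          using branch[of \<beta>] by argo
        then have "\<sigma> \<beta> = \<sigma> \<alpha>"
          using separating[OF \<open>\<xi> \<in> C'\<close>] \<beta> that by blast
        moreover have "\<exists>\<gamma><\<xi>. branch \<xi> \<gamma> = \<sigma> \<alpha> \<inter> {..<\<xi>}"
          using \<beta> by blast
        then have "D \<xi> (\<sigma> \<alpha> \<inter> {..<\<xi>}) = target \<xi> \<beta>"
          unfolding D_def \<beta>_def by simp
        ultimately show ?thesis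
          using target \<beta> by simp
      qed
      then have "\<xi> \<in> diag_inter (\<lambda>\<alpha>. {\<xi>. D \<xi> (\<sigma> \<alpha> \<inter> {..<\<xi>}) = a (\<sigma> \<alpha>) \<inter> {..<\<xi>}})"
        unfolding diag_inter_def by blast
      with \<open>\<xi> \<in> C\<close> show "C \<inter> diag_inter (\<lambda>\<alpha>. {\<xi>. D \<xi> (\<sigma> \<alpha> \<inter> {..<\<xi>}) = a (\<sigma> \<alpha>) \<inter> {..<\<xi>}}) \<noteq> {}"
        by blast
    qed
  qed
  then show ?thesis by blast
qed

lemma joint_diamond_imp_diamond:
  assumes "joint_diamond (d :: 'i \<Rightarrow> 'a \<Rightarrow> 'a set)"
  shows "diamond TYPE('a)"
  unfolding diamond_def
proof (intro exI conjI allI)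
  fix i
  show "kappa_list (d i)"
    using assms unfolding joint_diamond_def by blast
  fix A
  obtain F where "pnu_filter F" "{\<xi>. d i \<xi> = A \<inter> {..<\<xi>}} \<in> F"
    using assms[unfolded joint_diamond_def, THEN conjunct2, rule_format, of "\<lambda>_. A"] by blast
  then have "stationary {\<xi>. d i \<xi> = A \<inter> {..<\<xi>}}"
    by (rule pnu_filter_stationary)
  then show "stationary {\<xi>. A \<inter> {..<\<xi>} = d i \<xi>}"
    by (simp add: eq_commute)
qed

end

lemma diamond_tree_imp_joint_diamond:
  assumes "diamond_tree D"
  shows "joint_diamond (\<lambda>s \<xi>. D \<xi> (s \<inter> {..<\<xi>}) \<inter> {..<\<xi>})"
  unfolding joint_diamond_def
proof (intro conjI allI)
  show "kappa_list (\<lambda>\<xi>. D \<xi> (s \<inter> {..<\<xi>}) \<inter> {..<\<xi>})" for s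
    unfolding kappa_list_def by blast
  fix a :: "'a set \<Rightarrow> 'a set"
  obtain F where F: "pnu_filter F" "\<And>s. {\<xi>. D \<xi> (s \<inter> {..<\<xi>}) = a s \<inter> {..<\<xi>}} \<in> F"
    using assms unfolding diamond_tree_def by blast
  have "{\<xi>. D \<xi> (s \<inter> {..<\<xi>}) \<inter> {..<\<xi>} = a s \<inter> {..<\<xi>}} \<in> F" for s
    by (rule is_filter_mono[OF pnu_filter_is_filter[OF F(1)] F(2)]) auto
  with F(1) show "\<exists>F. pnu_filter F \<and> (\<forall>s. {\<xi>. D \<xi> (s \<inter> {..<\<xi>}) \<inter> {..<\<xi>} = a s \<inter> {..<\<xi>}} \<in> F)"
    by blast
qed

lemma joint_diamond_reindex:
  assumes "joint_diamond d" and "inj f"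
  shows "joint_diamond (\<lambda>j. d (f j))"
  unfolding joint_diamond_def
proof (intro conjI allI)
  show "kappa_list (d (f j))" for j
    using assms(1) unfolding joint_diamond_def by blast
  fix a
  obtain F where "pnu_filter F" "\<forall>i. {\<xi>. d i \<xi> = a (inv f i) \<inter> {..<\<xi>}} \<in> F"
    using assms(1)[unfolded joint_diamond_def, THEN conjunct2, rule_format, of "\<lambda>i. a (inv f i)"]
    by blast
  then show "\<exists>F. pnu_filter F \<and> (\<forall>j. {\<xi>. d (f j) \<xi> = a j \<inter> {..<\<xi>}} \<in> F)"
    using inv_f_f[OF assms(2)] by metis
qed

theorem theorem5p8:
  assumes "uncountable_regular_cardinal TYPE('a::wellorder)"
  shows "(diamond TYPE('a) \<longleftrightarrow> (\<exists>d :: 'a \<Rightarrow> 'a \<Rightarrow> 'a set. joint_diamond d))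
       \<and> (diamond TYPE('a) \<longleftrightarrow> (\<exists>d :: 'a set \<Rightarrow> 'a \<Rightarrow> 'a set. joint_diamond d))
       \<and> (diamond TYPE('a) \<longleftrightarrow> (\<exists>D :: 'a \<Rightarrow> 'a set \<Rightarrow> 'a set. diamond_tree D))"
proof -
  have tree: "(\<exists>D :: 'a \<Rightarrow> 'a set \<Rightarrow> 'a set. diamond_tree D) \<Longrightarrow> \<exists>d :: 'a set \<Rightarrow> 'a \<Rightarrow> 'a set. joint_diamond d"
    using diamond_tree_imp_joint_diamond by blast
  have singletons: "joint_diamond (d :: 'a set \<Rightarrow> 'a \<Rightarrow> 'a set) \<Longrightarrow> joint_diamond (\<lambda>\<alpha>. d {\<alpha>})" for d
    by (rule joint_diamond_reindex[OF _ inj_singleton])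
  show ?thesis
    using diamond_imp_diamond_tree[OF assms] tree singletons
      joint_diamond_imp_diamond[OF assms] by blast
qed

end
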